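(* Let $\mathcal{X}$ be a real Banach space and $g:[a,b]\to\mathcal{X}^*$. Assume that $g$ is Denjoy–Gel'fand integrable on $[a,t]$ for every $t\in[a,b)$ and that for each $y\in\mathcal{X}$ the limit $\lim_{t\to b^-}\mathcal{D}\int_a^t yg$ exists. Then $g$ is Denjoy–Gel'fand integrable on $[a,b]$ and $$\Big\langle y,\ \mathcal{DG}\int_a^b g\Big\rangle=\lim_{t\to b^-}\Big\langle y,\ \mathcal{DG}\int_a^t g\Big\rangle\quad\text{for each } y\in\mathcal{X}.$$
   Context: For $y\in\mathcal{X}$, $yg$ denotes the real function $t\mapsto g(t)(y)$. A function $F:[a,b]\to\mathbb{R}$ is AC on a set $E$ if for every $\epsilon>0$ there is $\eta>0$ such that for every finite family of nonoverlapping intervals $[c_i,d_i]$ with endpoints in $E$ and $\sum(d_i-c_i)<\eta$ one has $\sum|F(d_i)-F(c_i)|<\epsilon$; $F$ is ACG on $[a,b]$ if $F$ is continuous on $[a,b]$ and $[a,b]$ is a countable union of sets on each of which $F$ is AC. A function $h:[a,b]\to\mathbb{R}$ is Denjoy integrable on $[a,b]$ if there is an ACG function $F$ on $[a,b]$ whose approximate derivative equals $h$ a.e.; then $\mathcal{D}\int_a^b h=F(b)-F(a)$ (and similarly on subintervals). A function $g:[a,b]\to\mathcal{X}^*$ is Denjoy–Gel'fand integrable on $[a,b]$ if $yg$ is Denjoy integrable on $[a,b]$ for each $y\in\mathcal{X}$ and for every interval $I\subset[a,b]$ there is $y_I^*\in\mathcal{X}^*$ with $y_I^*(y)=\mathcal{D}\int_I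 yg$ for all $y\in\mathcal{X}$; one writes $\mathcal{DG}\int_I g=y_I^*$. *)

theory Defs
  imports "HOL-Analysis.Analysis"
begin

definition AC_on_set :: "(real \<Rightarrow> real) \<Rightarrow> real set \<Rightarrow> bool" where
  "AC_on_set F E \<longleftrightarrow>
     (\<forall>\<epsilon>>0. \<exists>\<eta>>0. \<forall>(n::nat) (c::nat \<Rightarrow> real) (d::nat \<Rightarrow> real).
        (\<forall>i<n. c i \<in> E \<and> d i \<in> E \<and> c i \<le> d i) \<and>
        (\<forall>i<n. \<forall>j<n. i \<noteq> j \<longrightarrow> d i \<le> c j \<or> d j \<le> c i) \<and>
        (\<Sum>i<n. d i - c i) < \<eta>
        \<longrightarrow> (\<Sum>i<n. \<bar>F (d i) - F (c i)\<bar>) < \<epsilon>)"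

definition ACG_on :: "(real \<Rightarrow> real) \<Rightarrow> real \<Rightarrow> real \<Rightarrow> bool" where
  "ACG_on F a b \<longleftrightarrow> continuous_on {a..b} F \<and>
     (\<exists>E :: nat \<Rightarrow> real set. (\<Union>n. E n) = {a..b} \<and> (\<forall>n. AC_on_set F (E n)))"

definition approx_deriv :: "(real \<Rightarrow> real) \<Rightarrow> real \<Rightarrow> real \<Rightarrow> real \<Rightarrow> real \<Rightarrow> bool" where
  "approx_deriv F a b x L \<longleftrightarrow>
     (\<forall>\<epsilon>>0. ((\<lambda>r. measure lebesgue
          {y \<in> {a..b}. y \<noteq> x \<and> \<bar>y - x\<bar> \<le> r \<and> \<bar>(F y - F x) / (y - x) - L\<bar> \<ge> \<epsilon>} / r)
        \<longlongrightarrow> 0) (at_right 0))"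

definition denjoy_primitive :: "(real \<Rightarrow> real) \<Rightarrow> (real \<Rightarrow> real) \<Rightarrow> real \<Rightarrow> real \<Rightarrow> bool" where
  "denjoy_primitive F h a b \<longleftrightarrow> ACG_on F a b \<and>
     (AE x in lebesgue. x \<in> {a..b} \<longrightarrow> approx_deriv F a b x (h x))"

definition denjoy_integrable :: "(real \<Rightarrow> real) \<Rightarrow> real \<Rightarrow> real \<Rightarrow> bool" where
  "denjoy_integrable h a b \<longleftrightarrow> (\<exists>F. denjoy_primitive F h a b)"

definition denjoy_integral :: "(real \<Rightarrow> real) \<Rightarrow> real \<Rightarrow> real \<Rightarrow> real" where
  "denjoy_integral h a b = (SOME I. \<exists>F. denjoy_primitive F h a b \<and> I = F b - F a)"

definition DG_integrable :: "(real \<Rightarrow> ('a::banach \<Rightarrow>\<^sub>L real)) \<Rightarrow> real \<Rightarrow> real \<Rightarrow> bool" where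
  "DG_integrable g a b \<longleftrightarrow>
     (\<forall>y. denjoy_integrable (\<lambda>t. g t y) a b) \<and>
     (\<forall>c d. a \<le> c \<and> c \<le> d \<and> d \<le> b \<longrightarrow>
        (\<exists>ys :: 'a \<Rightarrow>\<^sub>L real. \<forall>y. blinfun_apply ys y = denjoy_integral (\<lambda>t. g t y) c d))"

definition DG_integral :: "(real \<Rightarrow> ('a::banach \<Rightarrow>\<^sub>L real)) \<Rightarrow> real \<Rightarrow> real \<Rightarrow> ('a \<Rightarrow>\<^sub>L real)" where
  "DG_integral g c d = (THE ys :: 'a \<Rightarrow>\<^sub>L real. \<forall>y. blinfun_apply ys y = denjoy_integral (\<lambda>t. g t y) c d)"

end

theory Submission
  imports Defs
begin

text \<open>For every \<open>y\<close> the scalar primitive \<open>t \<mapsto> \<integral>[a,t] yg\<close> on \<open>[a, b[\<close>, extended to \<open>b\<close> by its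
  limit, is again continuous and ACG with approximate derivative \<open>yg\<close> a.e. on \<open>[a, b]\<close> (Hake's
  theorem). That its increments are Denjoy integrals rests on uniqueness: an ACG function with
  approximate derivative zero a.e. maps \<open>[a, b]\<close> onto a null set (Lusin's property (N) on the AC
  pieces, a Lipschitz estimate at small scales elsewhere), hence is constant. Along a sequence
  \<open>t\<^sub>k \<rightarrow> b\<close> from the left the functionals \<open>\<integral>[a,t\<^sub>k] g\<close> converge pointwise, so by the
  Banach--Steinhaus theorem the limit is a bounded functional; it serves as \<open>\<integral>[a,b] g\<close>, and the
  integrals over \<open>[c, d]\<close> are differences of these initial integrals.\<close>

section \<open>Approximate derivatives\<close>

definition approx_deriv_bad_set ::
    "(real \<Rightarrow> real) \<Rightarrow> real \<Rightarrow> real \<Rightarrow> real \<Rightarrow> real \<Rightarrow> real \<Rightarrow> real \<Rightarrow> real set" where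
  "approx_deriv_bad_set F a b x L e r =
     {y \<in> {a..b}. y \<noteq> x \<and> \<bar>y - x\<bar> \<le> r \<and> \<bar>(F y - F x) / (y - x) - L\<bar> \<ge> e}"

lemma approx_deriv_iff_bad_set:
  "approx_deriv F a b x L \<longleftrightarrow>
     (\<forall>e>0. ((\<lambda>r. measure lebesgue (approx_deriv_bad_set F a b x L e r) / r) \<longlongrightarrow> 0) (at_right 0))"
  unfolding approx_deriv_def approx_deriv_bad_set_def by (rule refl)

lemma approx_deriv_bad_set_lmeasurable:
  assumes "continuous_on {a..b} F"
  shows "approx_deriv_bad_set F a b x L e r \<in> lmeasurable"
proof -
  let ?S = "{a..b} - {x}"
  let ?q = "\<lambda>y. \<bar>(F y - F x) / (y - x) - L\<bar>"
  have "continuous_on ?S ?q"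
    by (intro continuous_intros continuous_on_subset[OF assms]) auto
  then have "closedin (top_of_set ?S) (?S \<inter> ?q -` {e..})"
    by (rule continuous_closedin_preimage) (rule closed_atLeast)
  then have "?S \<inter> ?q -` {e..} \<in> sets lebesgue"
    by (rule lebesgue_closedin) simp
  then have "?S \<inter> ?q -` {e..} \<inter> cball x r \<in> sets lebesgue"
    by (rule sets.Int) simp_all
  moreover have "approx_deriv_bad_set F a b x L e r = ?S \<inter> ?q -` {e..} \<inter> cball x r"
    unfolding approx_deriv_bad_set_def by (auto simp: dist_real_def abs_minus_commute)
  ultimately show ?thesis
    by (metis bounded_Int bounded_cball bounded_set_imp_lmeasurable)
qed

lemma approx_deriv_subinterval:
  assumes F: "continuous_on {a..b} F" and "a \<le> c" "d \<le> b"
    and "approx_deriv F a b x L"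
  shows "approx_deriv F c d x L"
  unfolding approx_deriv_iff_bad_set
proof (intro allI impI)
  fix e :: real assume "e > 0"
  let ?B = "approx_deriv_bad_set F a b x L e" and ?C = "approx_deriv_bad_set F c d x L e"
  have lim: "((\<lambda>r. measure lebesgue (?B r) / r) \<longlongrightarrow> 0) (at_right 0)"
    using assms(4) \<open>e > 0\<close> unfolding approx_deriv_iff_bad_set by blast
  have Fcd: "continuous_on {c..d} F"
    using F by (rule continuous_on_subset) (use assms(2,3) in auto)
  have le: "measure lebesgue (?C r) \<le> measure lebesgue (?B r)" for r
    using assms(2,3)
    by (intro measure_mono_fmeasurable fmeasurableD approx_deriv_bad_set_lmeasurable F Fcd)
       (auto simp: approx_deriv_bad_set_def)
  show "((\<lambda>r. measure lebesgue (?C r) / r) \<longlongrightarrow> 0) (at_right 0)"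
  proof (rule tendsto_sandwich[OF _ _ tendsto_const lim])
    show "\<forall>\<^sub>F r in at_right 0. 0 \<le> measure lebesgue (?C r) / r"
      using eventually_at_right_less by (rule eventually_mono) simp
    show "\<forall>\<^sub>F r in at_right 0. measure lebesgue (?C r) / r \<le> measure lebesgue (?B r) / r"
      using eventually_at_right_less by (rule eventually_mono) (intro divide_right_mono le, simp)
  qed
qed

lemma approx_deriv_diff:
  assumes F: "continuous_on {a..b} F" and G: "continuous_on {a..b} G"
    and "approx_deriv F a b x L" "approx_deriv G a b x L"
  shows "approx_deriv (\<lambda>y. F y - G y) a b x 0"
  unfolding approx_deriv_iff_bad_set
proof (intro allI impI)
  fix e :: real assume "e > 0"
  let ?BF = "approx_deriv_bad_set F a b x L (e/2)"
  let ?BG = "approx_deriv_bad_set G a b x L (e/2)"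
  let ?BH = "approx_deriv_bad_set (\<lambda>y. F y - G y) a b x 0 e"
  have lim: "((\<lambda>r. measure lebesgue (?BF r) / r + measure lebesgue (?BG r) / r) \<longlongrightarrow> 0 + 0) (at_right 0)"
    using assms(3,4) \<open>e > 0\<close> unfolding approx_deriv_iff_bad_set by (intro tendsto_add) simp_all
  have sub: "?BH r \<subseteq> ?BF r \<union> ?BG r" for r
  proof
    fix y assume "y \<in> ?BH r"
    then have y: "y \<in> {a..b}" "y \<noteq> x" "\<bar>y - x\<bar> \<le> r"
      and "e \<le> \<bar>((F y - F x)/(y - x) - L) - ((G y - G x)/(y - x) - L)\<bar>"
      unfolding approx_deriv_bad_set_def by (auto simp: diff_divide_distrib)
    then have "e/2 \<le> \<bar>(F y - F x)/(y - x) - L\<bar> \<or> e/2 \<le> \<bar>(G y - G x)/(y - x) - L\<bar>"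
      by linarith
    with y show "y \<in> ?BF r \<union> ?BG r" unfolding approx_deriv_bad_set_def by blast
  qed
  have le: "measure lebesgue (?BH r) \<le> measure lebesgue (?BF r) + measure lebesgue (?BG r)" for r
  proof -
    have "measure lebesgue (?BH r) \<le> measure lebesgue (?BF r \<union> ?BG r)"
      using sub by (intro measure_mono_fmeasurable fmeasurableD fmeasurable.Un
          approx_deriv_bad_set_lmeasurable continuous_on_diff F G)
    also have "\<dots> \<le> measure lebesgue (?BF r) + measure lebesgue (?BG r)"
      by (intro measure_Un_le fmeasurableD approx_deriv_bad_set_lmeasurable F G)
    finally show ?thesis .
  qed
  show "((\<lambda>r. measure lebesgue (?BH r) / r) \<longlongrightarrow> 0) (at_right 0)"
  proof (rule tendsto_sandwich[OF _ _ tendsto_const lim[unfolded add_0_right]])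
    show "\<forall>\<^sub>F r in at_right 0. 0 \<le> measure lebesgue (?BH r) / r"
      using eventually_at_right_less by (rule eventually_mono) simp
    show "\<forall>\<^sub>F r in at_right 0. measure lebesgue (?BH r) / r
            \<le> measure lebesgue (?BF r) / r + measure lebesgue (?BG r) / r"
      using eventually_at_right_less by (rule eventually_mono)
        (simp only: add_divide_distrib[symmetric], intro divide_right_mono le, simp)
  qed
qed

lemma approx_deriv_cong_add_const:
  assumes "approx_deriv G a b x L" "x \<in> {a..b}" "\<And>y. y \<in> {a..b} \<Longrightarrow> F y = G y + C"
  shows "approx_deriv F a b x L"
proof -
  have "approx_deriv_bad_set F a b x L e r = approx_deriv_bad_set G a b x L e r" for e r
    using assms(2,3) unfolding approx_deriv_bad_set_def by auto
  then show ?thesis using assms(1) unfolding approx_deriv_iff_bad_set by simp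
qed

lemma approx_deriv_superinterval:
  assumes "approx_deriv F a t x L" "x < t" "t \<le> b"
  shows "approx_deriv F a b x L"
  unfolding approx_deriv_iff_bad_set
proof (intro allI impI)
  fix e :: real assume "e > 0"
  have "approx_deriv_bad_set F a t x L e r = approx_deriv_bad_set F a b x L e r" if "r < t - x" for r
    using that assms(3) unfolding approx_deriv_bad_set_def by auto
  then have "\<forall>\<^sub>F r in at_right 0. measure lebesgue (approx_deriv_bad_set F a t x L e r) / r
                                = measure lebesgue (approx_deriv_bad_set F a b x L e r) / r"
    using assms(2) by (intro eventually_at_rightI[of 0 "t - x"]) auto
  moreover have "((\<lambda>r. measure lebesgue (approx_deriv_bad_set F a t x L e r) / r) \<longlongrightarrow> 0) (at_right 0)"
    using assms(1) \<open>e > 0\<close> unfolding approx_deriv_iff_bad_set by blast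
  ultimately show "((\<lambda>r. measure lebesgue (approx_deriv_bad_set F a b x L e r) / r) \<longlongrightarrow> 0) (at_right 0)"
    by (rule Lim_transform_eventually[rotated])
qed

text \<open>If the points of \<open>]x, y[\<close> that are bad for \<open>x\<close> or for \<open>y\<close> do not fill the interval,
  a common good point \<open>z\<close> links \<open>x\<close> and \<open>y\<close> by two \<open>\<epsilon>\<close>-Lipschitz steps.\<close>
lemma approx_deriv_zero_difference_bound:
  fixes H :: "real \<Rightarrow> real"
  assumes H: "continuous_on {c..d} H" and xy: "x \<in> {c..d}" "y \<in> {c..d}" "x < y"
    and "measure lebesgue (approx_deriv_bad_set H c d x 0 \<epsilon> (y - x)) < (y - x) / 4"
    and "measure lebesgue (approx_deriv_bad_set H c d y 0 \<epsilon> (y - x)) < (y - x) / 4"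
  shows "\<bar>H y - H x\<bar> \<le> \<epsilon> * (y - x)"
proof -
  let ?A = "approx_deriv_bad_set H c d x 0 \<epsilon> (y - x)"
  let ?B = "approx_deriv_bad_set H c d y 0 \<epsilon> (y - x)"
  have mA: "?A \<in> lmeasurable" and mB: "?B \<in> lmeasurable"
    using H by (rule approx_deriv_bad_set_lmeasurable)+
  have "\<not> {x<..<y} \<subseteq> ?A \<union> ?B"
  proof
    assume "{x<..<y} \<subseteq> ?A \<union> ?B"
    then have "measure lebesgue {x<..<y} \<le> measure lebesgue (?A \<union> ?B)"
      by (intro measure_mono_fmeasurable fmeasurable.Un mA mB) auto
    also have "\<dots> \<le> measure lebesgue ?A + measure lebesgue ?B"
      by (intro measure_Un_le fmeasurableD mA mB)
    finally show False using assms(5,6) xy(3) by simp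
  qed
  then obtain z where z: "x < z" "z < y" "z \<notin> ?A" "z \<notin> ?B" by fastforce
  have "z \<in> {c..d}" using z xy by auto
  with z have "\<bar>H z - H x\<bar> < \<epsilon> * (z - x)" "\<bar>H z - H y\<bar> < \<epsilon> * (y - z)"
    by (auto simp: approx_deriv_bad_set_def abs_divide abs_minus_commute not_le pos_divide_less_eq)
  then show ?thesis by (simp add: algebra_simps)
qed

section \<open>Absolute continuity on sets\<close>

definition AC_modulus :: "(real \<Rightarrow> real) \<Rightarrow> real set \<Rightarrow> real \<Rightarrow> real \<Rightarrow> bool" where
  "AC_modulus F E e \<eta> \<longleftrightarrow> (\<forall>(n::nat) (c::nat \<Rightarrow> real) (d::nat \<Rightarrow> real).
        (\<forall>i<n. c i \<in> E \<and> d i \<in> E \<and> c i \<le> d i) \<and>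
        (\<forall>i<n. \<forall>j<n. i \<noteq> j \<longrightarrow> d i \<le> c j \<or> d j \<le> c i) \<and>
        (\<Sum>i<n. d i - c i) < \<eta>
        \<longrightarrow> (\<Sum>i<n. \<bar>F (d i) - F (c i)\<bar>) < e)"

lemma AC_on_set_iff_AC_modulus: "AC_on_set F E \<longleftrightarrow> (\<forall>e>0. \<exists>\<eta>>0. AC_modulus F E e \<eta>)"
  unfolding AC_on_set_def AC_modulus_def by (rule refl)

lemma AC_modulusI:
  assumes "\<And>(n::nat) (c::nat \<Rightarrow> real) d. \<lbrakk>\<And>i. i < n \<Longrightarrow> c i \<in> E \<and> d i \<in> E \<and> c i \<le> d i;
      \<And>i j. i < n \<Longrightarrow> j < n \<Longrightarrow> i \<noteq> j \<Longrightarrow> d i \<le> c j \<or> d j \<le> c i;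
      (\<Sum>i<n. d i - c i) < \<eta>\<rbrakk> \<Longrightarrow> (\<Sum>i<n. \<bar>F (d i) - F (c i)\<bar>) < e"
  shows "AC_modulus F E e \<eta>"
  unfolding AC_modulus_def using assms by blast

lemma AC_modulusD:
  fixes n :: nat and c d :: "nat \<Rightarrow> real"
  assumes "AC_modulus F E e \<eta>" "\<And>i. i < n \<Longrightarrow> c i \<in> E \<and> d i \<in> E \<and> c i \<le> d i"
    "\<And>i j. i < n \<Longrightarrow> j < n \<Longrightarrow> i \<noteq> j \<Longrightarrow> d i \<le> c j \<or> d j \<le> c i"
    "(\<Sum>i<n. d i - c i) < \<eta>"
  shows "(\<Sum>i<n. \<bar>F (d i) - F (c i)\<bar>) < e"
  using assms unfolding AC_modulus_def by blast

lemma AC_modulus_subset: "AC_modulus F E e \<eta> \<Longrightarrow> E' \<subseteq> E \<Longrightarrow> AC_modulus F E' e \<eta>"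
  by (rule AC_modulusI, erule AC_modulusD) auto

lemma AC_modulus_diff:
  assumes "AC_modulus F E (e/2) \<eta>" and "AC_modulus G E (e/2) \<eta>'"
  shows "AC_modulus (\<lambda>x. F x - G x) E e (min \<eta> \<eta>')"
proof (rule AC_modulusI)
  fix n :: nat and c d :: "nat \<Rightarrow> real"
  assume hyps: "\<And>i. i < n \<Longrightarrow> c i \<in> E \<and> d i \<in> E \<and> c i \<le> d i"
    "\<And>i j. i < n \<Longrightarrow> j < n \<Longrightarrow> i \<noteq> j \<Longrightarrow> d i \<le> c j \<or> d j \<le> c i"
    "(\<Sum>i<n. d i - c i) < min \<eta> \<eta>'"
  have "(\<Sum>i<n. d i - c i) < \<eta>" "(\<Sum>i<n. d i - c i) < \<eta>'"
    using hyps(3) by linarith+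
  then have "(\<Sum>i<n. \<bar>F (d i) - F (c i)\<bar>) < e/2" "(\<Sum>i<n. \<bar>G (d i) - G (c i)\<bar>) < e/2"
    using AC_modulusD[OF assms(1) hyps(1,2)] AC_modulusD[OF assms(2) hyps(1,2)] by auto
  moreover have "(\<Sum>i<n. \<bar>(F (d i) - G (d i)) - (F (c i) - G (c i))\<bar>)
        \<le> (\<Sum>i<n. \<bar>F (d i) - F (c i)\<bar>) + (\<Sum>i<n. \<bar>G (d i) - G (c i)\<bar>)"
    unfolding sum.distrib[symmetric] by (rule sum_mono) linarith
  ultimately show "(\<Sum>i<n. \<bar>(F (d i) - G (d i)) - (F (c i) - G (c i))\<bar>) < e"
    by linarith
qed

lemma AC_on_set_subset: "AC_on_set F E \<Longrightarrow> E' \<subseteq> E \<Longrightarrow> AC_on_set F E'"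
  unfolding AC_on_set_iff_AC_modulus using AC_modulus_subset by blast

lemma AC_on_set_diff:
  assumes "AC_on_set F E" "AC_on_set G E"
  shows "AC_on_set (\<lambda>x. F x - G x) E"
  unfolding AC_on_set_iff_AC_modulus
proof (intro allI impI)
  fix e :: real assume "e > 0"
  then obtain \<eta> \<eta>' where "\<eta> > 0" "AC_modulus F E (e/2) \<eta>" "\<eta>' > 0" "AC_modulus G E (e/2) \<eta>'"
    using assms unfolding AC_on_set_iff_AC_modulus by (meson half_gt_zero)
  then show "\<exists>\<eta>>0. AC_modulus (\<lambda>x. F x - G x) E e \<eta>"
    by (intro exI[of _ "min \<eta> \<eta>'"] conjI AC_modulus_diff) auto
qed

lemma AC_on_set_cong_add_const:
  assumes "AC_on_set G E" "\<And>x. x \<in> E \<Longrightarrow> F x = G x + C"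
  shows "AC_on_set F E"
proof -
  have "AC_modulus F E e \<eta>" if "AC_modulus G E e \<eta>" for e \<eta>
  proof (rule AC_modulusI)
    fix n :: nat and c d :: "nat \<Rightarrow> real"
    assume hyps: "\<And>i. i < n \<Longrightarrow> c i \<in> E \<and> d i \<in> E \<and> c i \<le> d i"
      "\<And>i j. i < n \<Longrightarrow> j < n \<Longrightarrow> i \<noteq> j \<Longrightarrow> d i \<le> c j \<or> d j \<le> c i"
      "(\<Sum>i<n. d i - c i) < \<eta>"
    have "(\<Sum>i<n. \<bar>F (d i) - F (c i)\<bar>) = (\<Sum>i<n. \<bar>G (d i) - G (c i)\<bar>)"
      using hyps(1) assms(2) by (intro sum.cong) auto
    also have "\<dots> < e" using that hyps by (rule AC_modulusD)
    finally show "(\<Sum>i<n. \<bar>F (d i) - F (c i)\<bar>) < e" .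
  qed
  then show ?thesis using assms(1) unfolding AC_on_set_iff_AC_modulus by blast
qed

lemma AC_on_set_singleton: "AC_on_set F {b}"
  unfolding AC_on_set_iff_AC_modulus
proof (intro allI impI exI conjI)
  fix e :: real assume "e > 0"
  show "AC_modulus F {b} e 1"
  proof (rule AC_modulusI)
    fix n :: nat and c d :: "nat \<Rightarrow> real"
    assume "\<And>i. i < n \<Longrightarrow> c i \<in> {b} \<and> d i \<in> {b} \<and> c i \<le> d i"
    then have "(\<Sum>i<n. \<bar>F (d i) - F (c i)\<bar>) = 0" by (intro sum.neutral) auto
    with \<open>e > 0\<close> show "(\<Sum>i<n. \<bar>F (d i) - F (c i)\<bar>) < e" by simp
  qed
qed simp

section \<open>Images of null sets\<close>

lemma AC_modulus_oscillation_sum: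
  fixes H :: "real \<Rightarrow> real" and u v :: "nat \<Rightarrow> real"
  assumes AC: "AC_modulus H E e \<eta>" and bdd: "bounded (H ` E)"
    and meets: "\<And>i. i < n \<Longrightarrow> E \<inter> {u i..v i} \<noteq> {}"
    and sep: "\<And>i j. i < n \<Longrightarrow> j < n \<Longrightarrow> i \<noteq> j \<Longrightarrow> v i \<le> u j \<or> v j \<le> u i"
    and len: "(\<Sum>i<n. v i - u i) < \<eta>"
  shows "(\<Sum>i<n. Sup (H ` (E \<inter> {u i..v i})) - Inf (H ` (E \<inter> {u i..v i}))) \<le> e"
proof (rule field_le_epsilon)
  fix \<delta> :: real assume "\<delta> > 0"
  define \<delta>' where "\<delta>' = \<delta> / (2 * (real n + 1))"
  have "\<delta>' > 0" unfolding \<delta>'_def using \<open>\<delta> > 0\<close> by simp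
  let ?V = "\<lambda>i. H ` (E \<inter> {u i..v i})"
  have bdd_V: "bdd_above (?V i)" "bdd_below (?V i)" for i
    using bdd by (meson bounded_imp_bdd_above bounded_imp_bdd_below bdd_above_mono
        bdd_below_mono image_mono inf_le1)+
  have "\<exists>s t. s \<in> E \<inter> {u i..v i} \<and> t \<in> E \<inter> {u i..v i} \<and>
      Sup (?V i) - \<delta>' < H s \<and> H t < Inf (?V i) + \<delta>'" if "i < n" for i
  proof -
    have ne: "?V i \<noteq> {}" using meets[OF that] by blast
    obtain s where "s \<in> E \<inter> {u i..v i}" "Sup (?V i) - \<delta>' < H s"
      using less_cSup_iff[OF ne bdd_V(1), of "Sup (?V i) - \<delta>'"] \<open>\<delta>' > 0\<close> by auto
    moreover obtain t where "t \<in> E \<inter> {u i..v i}" "H t < Inf (?V i) + \<delta>'"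
      using cInf_less_iff[OF ne bdd_V(2), of "Inf (?V i) + \<delta>'"] \<open>\<delta>' > 0\<close> by auto
    ultimately show ?thesis by blast
  qed
  then obtain s t where st: "\<And>i. i < n \<Longrightarrow> s i \<in> E \<inter> {u i..v i} \<and> t i \<in> E \<inter> {u i..v i} \<and>
      Sup (?V i) - \<delta>' < H (s i) \<and> H (t i) < Inf (?V i) + \<delta>'"
    by metis
  define c where "c i = min (s i) (t i)" for i
  define d where "d i = max (s i) (t i)" for i
  have cd: "c i \<in> E \<and> d i \<in> E \<and> c i \<le> d i" "u i \<le> c i" "d i \<le> v i" if "i < n" for i
    using st[OF that] unfolding c_def d_def by (auto simp: min_def max_def)
  have "(\<Sum>i<n. d i - c i) \<le> (\<Sum>i<n. v i - u i)"
    using cd by (intro sum_mono) fastforce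
  then have "(\<Sum>i<n. d i - c i) < \<eta>" using len by linarith
  moreover have "d i \<le> c j \<or> d j \<le> c i" if "i < n" "j < n" "i \<noteq> j" for i j
    using sep[OF that] cd[OF that(1)] cd[OF that(2)] by auto
  ultimately have "(\<Sum>i<n. \<bar>H (d i) - H (c i)\<bar>) < e"
    by (intro AC_modulusD[OF AC cd(1)])
  moreover have "Sup (?V i) - Inf (?V i) \<le> \<bar>H (d i) - H (c i)\<bar> + 2 * \<delta>'" if "i < n" for i
    using st[OF that] unfolding c_def d_def by (auto simp: min_def max_def abs_minus_commute)
  then have "(\<Sum>i<n. Sup (?V i) - Inf (?V i)) \<le> (\<Sum>i<n. \<bar>H (d i) - H (c i)\<bar>) + real n * (2 * \<delta>')"
    using sum_mono[of "{..<n}" "\<lambda>i. Sup (?V i) - Inf (?V i)" "\<lambda>i. \<bar>H (d i) - H (c i)\<bar> + 2 * \<delta>'"]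
    by (simp add: sum.distrib)
  moreover have "real n * (2 * \<delta>') \<le> \<delta>"
    unfolding \<delta>'_def using \<open>\<delta> > 0\<close> by (simp add: field_simps)
  ultimately show "(\<Sum>i<n. Sup (?V i) - Inf (?V i)) \<le> e + \<delta>"
    by linarith
qed

lemma negligible_interval_cover:
  fixes N :: "real set"
  assumes N: "negligible N" "N \<subseteq> {c..d}" and "c < d" "\<eta> > 0"
  obtains \<D> u v where "countable \<D>" "N \<subseteq> \<Union>\<D>"
    "\<And>K. K \<in> \<D> \<Longrightarrow> K = {u K..v K}"
    "\<And>K K'. K \<in> \<D> \<Longrightarrow> K' \<in> \<D> \<Longrightarrow> K \<noteq> K' \<Longrightarrow> v K \<le> u K' \<or> v K' \<le> u K"
    "\<And>G. G \<subseteq> \<D> \<Longrightarrow> finite G \<Longrightarrow> (\<Sum>K\<in>G. v K - u K) < \<eta>"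
proof -
  have "N \<in> lmeasurable" "N \<subseteq> cbox c d" "\<eta>/2 > 0"
    using N \<open>\<eta> > 0\<close> by (simp_all add: negligible_imp_measurable)
  then obtain \<D> where "countable \<D>"
    and \<D>_box: "\<And>K. K \<in> \<D> \<Longrightarrow> K \<subseteq> cbox c d \<and> K \<noteq> {} \<and> (\<exists>u v. K = cbox u v)"
    and \<D>_disj: "pairwise (\<lambda>A B. interior A \<inter> interior B = {}) \<D>"
    and \<D>_int: "\<And>K. K \<in> \<D> \<Longrightarrow> box c d \<noteq> {} \<Longrightarrow> interior K \<noteq> {}"
    and "N \<subseteq> \<Union>\<D>" "\<Union>\<D> \<in> lmeasurable" and "measure lebesgue (\<Union>\<D>) \<le> measure lebesgue N + \<eta>/2"
    by (rule measurable_outer_intervals_bounded) blast+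
  then have small: "measure lebesgue (\<Union>\<D>) < \<eta>"
    using N(1) \<open>\<eta> > 0\<close> by (simp add: negligible_imp_measure0)
  have "\<exists>u v. K = {u..v} \<and> u < v" if K: "K \<in> \<D>" for K
  proof -
    obtain p q where "K = cbox p q" using \<D>_box[OF K] by blast
    moreover have "interior K \<noteq> {}" using \<D>_int[OF K] \<open>c < d\<close> by simp
    ultimately show ?thesis by auto
  qed
  then obtain u v where uv: "\<And>K. K \<in> \<D> \<Longrightarrow> K = {u K..v K}" "\<And>K. K \<in> \<D> \<Longrightarrow> u K < v K"
    by metis
  have interior_K: "interior K = {u K<..<v K}" if "K \<in> \<D>" for K
    using uv(1)[OF that] by (metis interior_atLeastAtMost_real)
  have sep: "v K \<le> u K' \<or> v K' \<le> u K" if "K \<in> \<D>" "K' \<in> \<D>" "K \<noteq> K'" for K K'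
  proof (rule ccontr)
    assume "\<not> ?thesis"
    then have "(max (u K) (u K') + min (v K) (v K')) / 2 \<in> interior K \<inter> interior K'"
      using uv(2)[OF that(1)] uv(2)[OF that(2)] interior_K[OF that(1)] interior_K[OF that(2)]
      by (auto simp: field_simps max_def min_def)
    with \<D>_disj that show False unfolding pairwise_def by blast
  qed
  have "(\<Sum>K\<in>G. v K - u K) < \<eta>" if G: "G \<subseteq> \<D>" "finite G" for G
  proof -
    have "measure lebesgue K = v K - u K" if "K \<in> \<D>" for K
    proof -
      have "measure lebesgue {u K..v K} = v K - u K" using uv(2)[OF that] by simp
      then show ?thesis using uv(1)[OF that] by metis
    qed
    then have "(\<Sum>K\<in>G. v K - u K) = (\<Sum>K\<in>G. measure lebesgue K)"
      using G(1) by (intro sum.cong) auto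
    also have "\<dots> = measure lebesgue (\<Union>G)"
    proof (rule measure_negligible_finite_Union[symmetric, OF G(2)])
      show "K \<in> lmeasurable" if "K \<in> G" for K
        using that G(1) \<D>_box by auto
      show "pairwise (\<lambda>S T. negligible (S \<inter> T)) G"
        unfolding pairwise_def
      proof clarify
        fix K K' assume "K \<in> G" "K' \<in> G" "K \<noteq> K'"
        with G(1) have "K \<in> \<D>" "K' \<in> \<D>" "K \<noteq> K'" by auto
        then have "{u K..v K} \<inter> {u K'..v K'} \<subseteq> {u K, u K'}"
          using sep[of K K'] by auto
        then have "K \<inter> K' \<subseteq> {u K, u K'}"
          using uv(1) \<open>K \<in> \<D>\<close> \<open>K' \<in> \<D>\<close> by metis
        then show "negligible (K \<inter> K')" by (rule negligible_subset[rotated]) simp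
      qed
    qed
    also have "\<dots> \<le> measure lebesgue (\<Union>\<D>)"
      using G \<D>_box \<open>\<Union>\<D> \<in> lmeasurable\<close>
      by (intro measure_mono_fmeasurable sets.finite_Union) (auto intro!: fmeasurableD)
    finally show ?thesis using small by linarith
  qed
  with \<open>countable \<D>\<close> \<open>N \<subseteq> \<Union>\<D>\<close> uv(1) sep show ?thesis by (rule that)
qed

text \<open>Lusin's property (N): the null set is covered by nonoverlapping intervals of small total
  length, over which the oscillations of \<open>H\<close> on \<open>E\<close> add up to at most \<open>e\<close>.\<close>
lemma AC_on_set_image_negligible:
  fixes H :: "real \<Rightarrow> real"
  assumes AC: "AC_on_set H E" and bdd: "bounded (H ` E)"
    and N: "negligible N" "N \<subseteq> {c..d}" and "c < d"
  shows "negligible (H ` (N \<inter> E))"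
  unfolding negligible_outer_le
proof (intro allI impI)
  fix e :: real assume "e > 0"
  then obtain \<eta> where "\<eta> > 0" and mod: "AC_modulus H E e \<eta>"
    using AC unfolding AC_on_set_iff_AC_modulus by blast
  obtain \<D> u v where "countable \<D>" "N \<subseteq> \<Union>\<D>"
    and uv: "\<And>K. K \<in> \<D> \<Longrightarrow> K = {u K..v K}"
    and sep: "\<And>K K'. K \<in> \<D> \<Longrightarrow> K' \<in> \<D> \<Longrightarrow> K \<noteq> K' \<Longrightarrow> v K \<le> u K' \<or> v K' \<le> u K"
    and short: "\<And>G. G \<subseteq> \<D> \<Longrightarrow> finite G \<Longrightarrow> (\<Sum>K\<in>G. v K - u K) < \<eta>"
    by (rule negligible_interval_cover[OF N \<open>c < d\<close> \<open>\<eta> > 0\<close>]) blast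
  define \<D>' where "\<D>' = {K \<in> \<D>. E \<inter> K \<noteq> {}}"
  define J where "J K = {Inf (H ` (E \<inter> K)) .. Sup (H ` (E \<inter> K))}" for K
  have bdd_K: "bdd_above (H ` (E \<inter> K))" "bdd_below (H ` (E \<inter> K))" for K
    using bdd by (meson bounded_imp_bdd_above bounded_imp_bdd_below bdd_above_mono
        bdd_below_mono image_mono inf_le1)+
  have cover: "H ` (N \<inter> E) \<subseteq> \<Union>(J ` \<D>')"
  proof
    fix w assume "w \<in> H ` (N \<inter> E)"
    then obtain x K where "x \<in> E" "x \<in> K" "K \<in> \<D>" "w = H x"
      using \<open>N \<subseteq> \<Union>\<D>\<close> by blast
    then show "w \<in> \<Union>(J ` \<D>')"
      unfolding \<D>'_def J_def using bdd_K by (auto intro!: cInf_lower cSup_upper)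
  qed
  have bound: "measure lebesgue (\<Union>\<F>) \<le> e" if "\<F> \<subseteq> J ` \<D>'" "finite \<F>" for \<F>
  proof -
    obtain G where G: "G \<subseteq> \<D>'" "finite G" "\<F> = J ` G"
      using finite_subset_image[OF \<open>finite \<F>\<close> \<open>\<F> \<subseteq> J ` \<D>'\<close>] by blast
    define \<phi> where "\<phi> = from_nat_into G"
    have \<phi>: "bij_betw \<phi> {..<card G} G"
      unfolding \<phi>_def using G(2) by (rule bij_betw_from_nat_into_finite)
    then have \<phi>_in: "\<phi> i \<in> \<D>" "E \<inter> \<phi> i \<noteq> {}" if "i < card G" for i
      using that G(1) unfolding \<D>'_def bij_betw_def by auto
    have \<phi>_Icc: "{u (\<phi> i)..v (\<phi> i)} = \<phi> i" if "i < card G" for i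
      using uv \<phi>_in(1)[OF that] by metis
    have \<phi>_ne: "\<phi> i \<noteq> \<phi> j" if "i < card G" "j < card G" "i \<noteq> j" for i j
      using \<phi> that unfolding bij_betw_def inj_on_def by blast
    have "(\<Sum>i<card G. v (\<phi> i) - u (\<phi> i)) = (\<Sum>K\<in>G. v K - u K)"
      by (rule sum.reindex_bij_betw[OF \<phi>])
    also have "\<dots> < \<eta>" using G(1,2) unfolding \<D>'_def by (intro short) auto
    finally have len: "(\<Sum>i<card G. v (\<phi> i) - u (\<phi> i)) < \<eta>" .
    have "measure lebesgue (\<Union>\<F>) \<le> (\<Sum>K\<in>G. measure lebesgue (J K))"
      unfolding G(3) J_def by (intro measure_UNION_le G(2)) simp
    also have "\<dots> = (\<Sum>i<card G. Sup (H ` (E \<inter> \<phi> i)) - Inf (H ` (E \<inter> \<phi> i)))"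
      using \<phi>_in bdd_K
      by (simp add: sum.reindex_bij_betw[OF \<phi>, symmetric] J_def cInf_le_cSup)
    also have "\<dots> = (\<Sum>i<card G. Sup (H ` (E \<inter> {u (\<phi> i)..v (\<phi> i)}))
                                  - Inf (H ` (E \<inter> {u (\<phi> i)..v (\<phi> i)})))"
      using \<phi>_Icc by (intro sum.cong refl) simp
    also have "\<dots> \<le> e"
    proof (rule AC_modulus_oscillation_sum[OF mod bdd])
      show "E \<inter> {u (\<phi> i)..v (\<phi> i)} \<noteq> {}" if "i < card G" for i
        unfolding \<phi>_Icc[OF that] by (rule \<phi>_in(2)[OF that])
      show "v (\<phi> i) \<le> u (\<phi> j) \<or> v (\<phi> j) \<le> u (\<phi> i)" if "i < card G" "j < card G" "i \<noteq> j" for i j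
        using sep[OF \<phi>_in(1)[OF that(1)] \<phi>_in(1)[OF that(2)] \<phi>_ne[OF that]] .
    qed (fact len)
    finally show ?thesis .
  qed
  have countable: "countable (J ` \<D>')" using \<open>countable \<D>\<close> unfolding \<D>'_def by simp
  have measurable: "K \<in> lmeasurable" if "K \<in> J ` \<D>'" for K using that unfolding J_def by auto
  show "\<exists>T. H ` (N \<inter> E) \<subseteq> T \<and> T \<in> lmeasurable \<and> measure lebesgue T \<le> e"
    using cover fmeasurable_Union_bound[OF countable measurable bound]
      measure_Union_bound[OF countable measurable bound] by blast
qed

text \<open>A cover of the image of an \<open>\<epsilon>\<close>-Lipschitz-at-small-scales set: one ball of radius
  \<open>\<epsilon> h\<close> per cell of a grid of mesh \<open>h < \<delta>\<close> on \<open>[c, d]\<close>.\<close>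
lemma image_cover_if_small_scale_lipschitz:
  fixes H :: "real \<Rightarrow> real"
  assumes "c < d" "S \<subseteq> {c..d}" "\<delta> > 0" "\<epsilon> \<ge> 0"
    and lip: "\<And>x y. x \<in> S \<Longrightarrow> y \<in> S \<Longrightarrow> \<bar>y - x\<bar> < \<delta> \<Longrightarrow> \<bar>H y - H x\<bar> \<le> \<epsilon> * \<bar>y - x\<bar>"
  obtains M where "M \<in> lmeasurable" "H ` S \<subseteq> M" "measure lebesgue M \<le> 4 * \<epsilon> * (d - c)"
proof -
  define m where "m = nat \<lceil>(d - c) / \<delta>\<rceil> + 1"
  define h where "h = (d - c) / m"
  have "m \<ge> 1" unfolding m_def by simp
  have "h > 0" unfolding h_def using \<open>c < d\<close> \<open>m \<ge> 1\<close> by simp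
  have "(d - c) / \<delta> < m" unfolding m_def by linarith
  then have "h < \<delta>"
    unfolding h_def using \<open>\<delta> > 0\<close> \<open>m \<ge> 1\<close> by (simp add: field_simps)
  have mh: "m * h = d - c" unfolding h_def using \<open>m \<ge> 1\<close> by simp
  define P where "P i = {c + i * h .. c + (i + 1) * h}" for i :: nat
  have cell: "\<exists>i \<le> m. x \<in> P i" if "x \<in> {c..d}" for x
  proof -
    define i where "i = nat \<lfloor>(x - c) / h\<rfloor>"
    have i: "real i \<le> (x - c) / h" "(x - c) / h < real i + 1" "(x - c) / h \<le> m"
      unfolding i_def using that \<open>h > 0\<close> mh by (auto simp: divide_le_eq mult.commute)
    then have "i \<le> m" by (metis of_nat_le_iff order_trans)
    moreover have "x \<in> P i"
      unfolding P_def using i \<open>h > 0\<close> by (auto simp: field_simps)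
    ultimately show ?thesis by blast
  qed
  define C where "C i = (if S \<inter> P i = {} then {} else cball (H (SOME z. z \<in> S \<inter> P i)) (\<epsilon> * h))" for i
  define M where "M = (\<Union>i\<le>m. C i)"
  have C: "C i \<in> lmeasurable" for i unfolding C_def by simp
  show ?thesis
  proof
    show "M \<in> lmeasurable" unfolding M_def using C by (intro fmeasurable.finite_UN) auto
    show "H ` S \<subseteq> M"
    proof
      fix w assume "w \<in> H ` S"
      then obtain x where x: "x \<in> S" "w = H x" by blast
      then obtain i where i: "i \<le> m" "x \<in> P i" using cell assms(2) by blast
      define z where "z = (SOME z. z \<in> S \<inter> P i)"
      have z: "z \<in> S \<inter> P i" unfolding z_def by (rule someI[of _ x]) (use x(1) i(2) in blast)
      have "\<bar>x - z\<bar> \<le> h" using z i(2) unfolding P_def by (auto simp: algebra_simps abs_le_iff)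
      moreover have "\<bar>H x - H z\<bar> \<le> \<epsilon> * \<bar>x - z\<bar>"
        using \<open>\<bar>x - z\<bar> \<le> h\<close> \<open>h < \<delta>\<close> x(1) z by (intro lip) auto
      ultimately have "\<bar>H x - H z\<bar> \<le> \<epsilon> * h"
        using \<open>\<epsilon> \<ge> 0\<close> by (meson mult_left_mono order_trans)
      then have "H x \<in> C i"
        using x i z unfolding C_def z_def by (auto simp: dist_real_def abs_minus_commute)
      with i x show "w \<in> M" unfolding M_def by blast
    qed
    have "measure lebesgue M \<le> (\<Sum>i\<le>m. measure lebesgue (C i))"
      unfolding M_def using C by (intro measure_UNION_le) auto
    also have "\<dots> \<le> (\<Sum>i\<le>m. 2 * \<epsilon> * h)"
      using \<open>\<epsilon> \<ge> 0\<close> \<open>h > 0\<close> by (intro sum_mono) (simp add: C_def cball_eq_atLeastAtMost)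
    also have "\<dots> = 2 * \<epsilon> * (m * h) + 2 * \<epsilon> * h" by (simp add: algebra_simps)
    also have "\<dots> \<le> 4 * \<epsilon> * (d - c)"
    proof -
      have "h \<le> d - c"
        unfolding h_def using divide_left_mono[of 1 "real m" "d - c"] \<open>c < d\<close> \<open>m \<ge> 1\<close> by simp
      then have "\<epsilon> * h \<le> \<epsilon> * (d - c)" using \<open>\<epsilon> \<ge> 0\<close> by (rule mult_left_mono)
      then show ?thesis unfolding mh by linarith
    qed
    finally show "measure lebesgue M \<le> 4 * \<epsilon> * (d - c)" .
  qed
qed

text \<open>Take for \<open>Z' k\<close> the points whose bad sets have measure below \<open>r / 4\<close> at all scales
  \<open>r < 1 / (k + 1)\<close>.\<close>
lemma approx_deriv_zero_lipschitz_decomposition: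
  fixes H :: "real \<Rightarrow> real"
  assumes H: "continuous_on {c..d} H" and "Z \<subseteq> {c..d}" "\<epsilon> > 0"
    and deriv: "\<And>x. x \<in> Z \<Longrightarrow> approx_deriv H c d x 0"
  obtains Z' where "\<And>x. x \<in> Z \<Longrightarrow> \<exists>k. x \<in> Z' k" "\<And>k j. k \<le> j \<Longrightarrow> Z' k \<subseteq> Z' j"
    "\<And>k. Z' k \<subseteq> Z"
    "\<And>k x y. x \<in> Z' k \<Longrightarrow> y \<in> Z' k \<Longrightarrow> \<bar>y - x\<bar> < 1 / Suc k \<Longrightarrow> \<bar>H y - H x\<bar> \<le> \<epsilon> * \<bar>y - x\<bar>"
proof
  let ?bad = "\<lambda>x r. measure lebesgue (approx_deriv_bad_set H c d x 0 \<epsilon> r)"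
  define Z' where "Z' k = {x \<in> Z. \<forall>r. 0 < r \<and> r < 1 / Suc k \<longrightarrow> ?bad x r < r / 4}" for k :: nat
  show "\<exists>k. x \<in> Z' k" if "x \<in> Z" for x
  proof -
    have "((\<lambda>r. ?bad x r / r) \<longlongrightarrow> 0) (at_right 0)"
      using deriv[OF that] \<open>\<epsilon> > 0\<close> unfolding approx_deriv_iff_bad_set by blast
    then have "\<forall>\<^sub>F r in at_right 0. ?bad x r / r < 1/4"
      by (rule order_tendstoD) simp
    then obtain b where "b > 0" and b: "\<And>r. 0 < r \<Longrightarrow> r < b \<Longrightarrow> ?bad x r / r < 1/4"
      unfolding eventually_at_right_field by auto
    obtain k :: nat where k: "1 / Suc k < b" using nat_approx_posE[OF \<open>b > 0\<close>] by blast
    have "?bad x r < r / 4" if "0 < r" "r < 1 / Suc k" for r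
    proof -
      have "?bad x r / r < 1/4" using b[of r] that k by linarith
      then show ?thesis using that(1) by (simp add: pos_divide_less_eq)
    qed
    with \<open>x \<in> Z\<close> show ?thesis unfolding Z'_def by blast
  qed
  show "Z' k \<subseteq> Z' j" if "k \<le> j" for k j
  proof -
    have "1 / real (Suc j) \<le> 1 / real (Suc k)" using that by (simp add: frac_le)
    then show ?thesis unfolding Z'_def by force
  qed
  show "Z' k \<subseteq> Z" for k unfolding Z'_def by blast
  show "\<bar>H y - H x\<bar> \<le> \<epsilon> * \<bar>y - x\<bar>" if "x \<in> Z' k" "y \<in> Z' k" "\<bar>y - x\<bar> < 1 / Suc k"
    for k x y
  proof -
    have "\<bar>H q - H p\<bar> \<le> \<epsilon> * (q - p)" if "p \<in> Z' k" "q \<in> Z' k" "p < q" "q - p < 1 / Suc k" for p q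
      using that \<open>Z \<subseteq> {c..d}\<close>
      by (intro approx_deriv_zero_difference_bound[OF H]) (auto simp: Z'_def)
    from this[of x y] this[of y x] that show ?thesis
      by (cases x y rule: linorder_cases) (auto simp: abs_minus_commute)
  qed
qed

lemma approx_deriv_zero_image_negligible:
  fixes H :: "real \<Rightarrow> real"
  assumes "c < d" and H: "continuous_on {c..d} H" and "Z \<subseteq> {c..d}"
    and deriv: "\<And>x. x \<in> Z \<Longrightarrow> approx_deriv H c d x 0"
  shows "negligible (H ` Z)"
  unfolding negligible_outer_le
proof (intro allI impI)
  fix e :: real assume "e > 0"
  define \<epsilon> where "\<epsilon> = e / (4 * (d - c))"
  have "\<epsilon> > 0" unfolding \<epsilon>_def using \<open>e > 0\<close> \<open>c < d\<close> by simp
  obtain Z' where Z'_cover: "\<And>x. x \<in> Z \<Longrightarrow> \<exists>k. x \<in> Z' k"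
    and Z'_mono: "\<And>k j. k \<le> j \<Longrightarrow> Z' k \<subseteq> Z' j" and Z'_sub: "\<And>k. Z' k \<subseteq> Z"
    and lip: "\<And>k x y. x \<in> Z' k \<Longrightarrow> y \<in> Z' k \<Longrightarrow> \<bar>y - x\<bar> < 1 / Suc k \<Longrightarrow> \<bar>H y - H x\<bar> \<le> \<epsilon> * \<bar>y - x\<bar>"
    using approx_deriv_zero_lipschitz_decomposition[OF H \<open>Z \<subseteq> {c..d}\<close> \<open>\<epsilon> > 0\<close> deriv] by blast
  have "\<exists>M. M \<in> lmeasurable \<and> H ` Z' k \<subseteq> M \<and> measure lebesgue M \<le> e" for k
  proof -
    have "4 * \<epsilon> * (d - c) = e" unfolding \<epsilon>_def using \<open>c < d\<close> by (simp add: field_simps)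
    moreover obtain M where "M \<in> lmeasurable" "H ` Z' k \<subseteq> M" "measure lebesgue M \<le> 4 * \<epsilon> * (d - c)"
    proof (rule image_cover_if_small_scale_lipschitz[of c d "Z' k" "1 / Suc k" \<epsilon> H])
      show "Z' k \<subseteq> {c..d}" using Z'_sub[of k] \<open>Z \<subseteq> {c..d}\<close> by blast
    qed (use \<open>c < d\<close> \<open>\<epsilon> > 0\<close> in \<open>auto intro: lip that\<close>)
    ultimately show ?thesis by auto
  qed
  then obtain M where M: "\<And>k. M k \<in> lmeasurable" "\<And>k. H ` Z' k \<subseteq> M k"
    "\<And>k. measure lebesgue (M k) \<le> e"
    by metis
  define B where "B k = (\<Inter>j. M (k + j))" for k
  have B_M: "B i \<subseteq> M n" if "i \<le> n" for i n
  proof -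
    have "B i \<subseteq> M (i + (n - i))" unfolding B_def by (rule INT_lower) simp
    with that show ?thesis by simp
  qed
  have B: "B k \<in> lmeasurable" for k
  proof (rule fmeasurableI2[OF M(1) B_M[OF order_refl]])
    show "B k \<in> sets lebesgue" unfolding B_def using M(1) by (intro sets.countable_INT) auto
  qed
  have bound: "measure lebesgue (\<Union>i\<le>n. B i) \<le> e" for n
  proof -
    have "measure lebesgue (\<Union>i\<le>n. B i) \<le> measure lebesgue (M n)"
      using B B_M M(1) by (intro measure_mono_fmeasurable sets.finite_UN) auto
    with M(3) show ?thesis by (rule order_trans[rotated])
  qed
  have "H ` Z \<subseteq> (\<Union>k. B k)"
  proof
    fix w assume "w \<in> H ` Z"
    then obtain x k where "x \<in> Z' k" "w = H x" using Z'_cover by blast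
    then have "w \<in> M (k + j)" for j using M(2) Z'_mono[of k "k + j"] by auto
    then show "w \<in> (\<Union>k. B k)" unfolding B_def by blast
  qed
  then show "\<exists>T. H ` Z \<subseteq> T \<and> T \<in> lmeasurable \<and> measure lebesgue T \<le> e"
    using fmeasurable_countable_Union[OF B bound] measure_countable_Union_le[OF B bound] by blast
qed

lemma continuous_on_negligible_image_const:
  fixes H :: "real \<Rightarrow> real"
  assumes H: "continuous_on {c..d} H" and "c \<le> d" and null: "negligible (H ` {c..d})"
  shows "H d = H c"
proof (rule ccontr)
  assume "H d \<noteq> H c"
  define p q where "p = min (H c) (H d)" and "q = max (H c) (H d)"
  have "connected (H ` {c..d})" using H by (rule connected_continuous_image) simp
  moreover have "p \<in> H ` {c..d}" "q \<in> H ` {c..d}"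
    unfolding p_def q_def using \<open>c \<le> d\<close> by (auto simp: min_def max_def)
  ultimately have "cbox p q \<subseteq> H ` {c..d}" by (simp add: connected_contains_Icc)
  then have "negligible (cbox p q)" by (rule negligible_subset[OF null])
  then show False
    using \<open>H d \<noteq> H c\<close> unfolding negligible_interval p_def q_def
    by (auto simp: min_def max_def split: if_splits)
qed

text \<open>Off a null set \<open>N\<close> the image of \<open>[c, d]\<close> is null because the derivative vanishes, and
  on \<open>N\<close> it is null because of the Lusin property of \<open>AC\<close> functions; so the continuous \<open>H\<close> is
  constant.\<close>
lemma ACG_on_zero_approx_deriv_const:
  assumes "c \<le> d" and ACG: "ACG_on H c d"
    and deriv: "AE x in lebesgue. x \<in> {c..d} \<longrightarrow> approx_deriv H c d x 0"
  shows "H d = H c"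
proof (cases "c = d")
  case False
  with \<open>c \<le> d\<close> have "c < d" by simp
  obtain E :: "nat \<Rightarrow> real set" where H: "continuous_on {c..d} H" and E: "(\<Union>n. E n) = {c..d}" "\<And>n. AC_on_set H (E n)"
    using ACG unfolding ACG_on_def by blast
  obtain N where N_null: "emeasure lebesgue N = 0" "N \<in> sets lebesgue"
    and N: "{x \<in> space lebesgue. \<not> (x \<in> {c..d} \<longrightarrow> approx_deriv H c d x 0)} \<subseteq> N"
    using deriv by (rule AE_E)
  from N_null have "negligible N" by (simp add: negligible_iff_null_sets null_setsI)
  have deriv_Z: "approx_deriv H c d x 0" if "x \<in> {c..d} - N" for x
    using N that by auto
  have "bounded (H ` {c..d})" using H by (intro compact_imp_bounded compact_continuous_image) auto
  then have bdd: "bounded (H ` E n)" for n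
    by (rule bounded_subset) (use E(1) in blast)
  have "H ` {c..d} \<subseteq> (\<Union>n. H ` ((N \<inter> {c..d}) \<inter> E n)) \<union> H ` ({c..d} - N)"
    using E(1) by blast
  moreover have "negligible ((\<Union>n. H ` ((N \<inter> {c..d}) \<inter> E n)) \<union> H ` ({c..d} - N))"
  proof (intro negligible_Un negligible_Union_nat)
    show "negligible (H ` (N \<inter> {c..d} \<inter> E n))" for n
      using E(2) bdd negligible_subset[OF \<open>negligible N\<close>] \<open>c < d\<close>
      by (intro AC_on_set_image_negligible) auto
    show "negligible (H ` ({c..d} - N))"
      using \<open>c < d\<close> H deriv_Z by (intro approx_deriv_zero_image_negligible) auto
  qed
  ultimately have "negligible (H ` {c..d})" by (rule negligible_subset[rotated])
  with H \<open>c \<le> d\<close> show ?thesis by (rule continuous_on_negligible_image_const)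
qed simp

section \<open>The Denjoy integral\<close>

lemma ACG_on_countable_cover:
  assumes "a \<le> b" "continuous_on {a..b} F" "countable \<E>" "\<Union>\<E> = {a..b}"
    and "\<And>E. E \<in> \<E> \<Longrightarrow> AC_on_set F E"
  shows "ACG_on F a b"
proof -
  have "\<E> \<noteq> {}" using assms(1,4) by auto
  with assms show ?thesis
    unfolding ACG_on_def by (intro conjI exI[of _ "from_nat_into \<E>"]) (auto intro: from_nat_into)
qed

lemma ACG_on_diff:
  assumes "a \<le> b" "ACG_on F a b" "ACG_on G a b"
  shows "ACG_on (\<lambda>x. F x - G x) a b"
proof -
  obtain E E' :: "nat \<Rightarrow> real set" where
    F: "continuous_on {a..b} F" "(\<Union>n. E n) = {a..b}" "\<And>n. AC_on_set F (E n)" and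
    G: "continuous_on {a..b} G" "(\<Union>n. E' n) = {a..b}" "\<And>n. AC_on_set G (E' n)"
    using assms(2,3) unfolding ACG_on_def by metis
  show ?thesis
  proof (rule ACG_on_countable_cover)
    show "continuous_on {a..b} (\<lambda>x. F x - G x)" using F(1) G(1) by (rule continuous_on_diff)
    show "\<Union>((\<lambda>(i, j). E i \<inter> E' j) ` UNIV) = {a..b}" using F(2) G(2) by blast
    show "AC_on_set (\<lambda>x. F x - G x) S" if "S \<in> (\<lambda>(i, j). E i \<inter> E' j) ` UNIV" for S
      using that by (auto intro!: AC_on_set_diff AC_on_set_subset[OF F(3)] AC_on_set_subset[OF G(3)])
  qed (use assms(1) in simp_all)
qed

lemma denjoy_primitive_subinterval:
  assumes "denjoy_primitive F h a b" "a \<le> c" "d \<le> b"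
  shows "denjoy_primitive F h c d"
proof -
  obtain E :: "nat \<Rightarrow> real set" where F: "continuous_on {a..b} F"
    and E: "(\<Union>n. E n) = {a..b}" "\<And>n. AC_on_set F (E n)"
    and deriv: "AE x in lebesgue. x \<in> {a..b} \<longrightarrow> approx_deriv F a b x (h x)"
    using assms(1) unfolding denjoy_primitive_def ACG_on_def by blast
  have "continuous_on {c..d} F" using F by (rule continuous_on_subset) (use assms in auto)
  moreover have "(\<Union>n. E n \<inter> {c..d}) = {c..d}" using E(1) assms(2,3) by auto
  moreover have "AC_on_set F (E n \<inter> {c..d})" for n using E(2) by (rule AC_on_set_subset) blast
  moreover have "AE x in lebesgue. x \<in> {c..d} \<longrightarrow> approx_deriv F c d x (h x)"
    using deriv by eventually_elim (use F assms(2,3) in \<open>auto intro: approx_deriv_subinterval\<close>)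
  ultimately show ?thesis
    unfolding denjoy_primitive_def ACG_on_def by blast
qed

lemma denjoy_primitive_increment_unique:
  assumes "c \<le> d" "denjoy_primitive F h c d" "denjoy_primitive G h c d"
  shows "F d - F c = G d - G c"
proof -
  have cont: "continuous_on {c..d} F" "continuous_on {c..d} G"
    using assms(2,3) unfolding denjoy_primitive_def ACG_on_def by blast+
  have "AE x in lebesgue. x \<in> {c..d} \<longrightarrow> approx_deriv F c d x (h x)"
    "AE x in lebesgue. x \<in> {c..d} \<longrightarrow> approx_deriv G c d x (h x)"
    using assms(2,3) unfolding denjoy_primitive_def by blast+
  then have "AE x in lebesgue. x \<in> {c..d} \<longrightarrow> approx_deriv (\<lambda>x. F x - G x) c d x 0"
    by eventually_elim (auto intro: approx_deriv_diff[OF cont])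
  moreover have "ACG_on (\<lambda>x. F x - G x) c d"
    using assms unfolding denjoy_primitive_def by (intro ACG_on_diff) auto
  ultimately have "F d - G d = F c - G c"
    using assms(1) by (intro ACG_on_zero_approx_deriv_const)
  then show ?thesis by simp
qed

lemma denjoy_integral_eq_primitive:
  assumes "c \<le> d" "denjoy_primitive F h c d"
  shows "denjoy_integral h c d = F d - F c"
proof -
  have "\<exists>G. denjoy_primitive G h c d \<and> denjoy_integral h c d = G d - G c"
    unfolding denjoy_integral_def by (rule someI_ex) (use assms(2) in blast)
  then show ?thesis using denjoy_primitive_increment_unique[OF assms(1) _ assms(2)] by auto
qed

lemma denjoy_integral_add:
  assumes "denjoy_integrable h a b" "c \<in> {a..b}"
  shows "denjoy_integral h a c + denjoy_integral h c b = denjoy_integral h a b"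
proof -
  obtain F where F: "denjoy_primitive F h a b"
    using assms(1) unfolding denjoy_integrable_def by blast
  then have "denjoy_primitive F h a c" "denjoy_primitive F h c b"
    using assms(2) by (auto intro: denjoy_primitive_subinterval)
  then show ?thesis
    using F assms(2) by (simp add: denjoy_integral_eq_primitive)
qed

lemma denjoy_primitive_cong_add_const:
  assumes "denjoy_primitive G h a b" "\<And>x. x \<in> {a..b} \<Longrightarrow> F x = G x + C"
  shows "denjoy_primitive F h a b"
proof -
  obtain E :: "nat \<Rightarrow> real set" where G: "continuous_on {a..b} G"
    and E: "(\<Union>n. E n) = {a..b}" "\<And>n. AC_on_set G (E n)"
    and deriv: "AE x in lebesgue. x \<in> {a..b} \<longrightarrow> approx_deriv G a b x (h x)"
    using assms(1) unfolding denjoy_primitive_def ACG_on_def by blast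
  have "continuous_on {a..b} F"
    using G by (rule continuous_on_eq[OF continuous_on_add[OF _ continuous_on_const]]) (use assms(2) in auto)
  moreover have "AC_on_set F (E n)" for n
    using E assms(2) by (intro AC_on_set_cong_add_const[OF E(2)]) blast
  moreover have "AE x in lebesgue. x \<in> {a..b} \<longrightarrow> approx_deriv F a b x (h x)"
    using deriv by eventually_elim (use assms(2) in \<open>auto intro: approx_deriv_cong_add_const\<close>)
  ultimately show ?thesis
    using E(1) unfolding denjoy_primitive_def ACG_on_def by blast
qed

lemma at_left_approach_sequence:
  fixes a b :: real
  assumes "a < b"
  obtains t where "\<And>k. t k \<in> {a..<b}" "filterlim t (at_left b) sequentially"
proof
  let ?t = "\<lambda>k. b - (b - a) / real (Suc (Suc k))"
  show "?t k \<in> {a..<b}" for k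
    using assms mult_right_mono[of a b "real k"] by (auto simp: field_simps)
  have "(\<lambda>k. (b - a) / real (Suc (Suc k))) \<longlonglongrightarrow> 0"
    by (intro LIMSEQ_Suc lim_const_over_n)
  then have "?t \<longlonglongrightarrow> b - 0"
    by (intro tendsto_diff tendsto_const)
  moreover have "\<forall>\<^sub>F k in sequentially. ?t k \<in> {..<b} \<and> ?t k \<noteq> b"
    using assms by simp
  ultimately show "filterlim ?t (at_left b) sequentially"
    by (simp add: filterlim_at)
qed

lemma continuous_on_from_initial_segments:
  fixes F :: "real \<Rightarrow> real"
  assumes "a < b" and exceeds: "\<And>x. x < b \<Longrightarrow> \<exists>k. x < t k" and "\<And>k. t k \<le> b"
    and cont: "\<And>k. continuous_on {a..t k} F" and lim: "(F \<longlongrightarrow> F b) (at_left b)"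
  shows "continuous_on {a..b} F"
  unfolding continuous_on_eq_continuous_within
proof
  fix x assume x: "x \<in> {a..b}"
  show "continuous (at x within {a..b}) F"
  proof (cases "x < b")
    case True
    then obtain k where "x < t k" using exceeds by blast
    then have "at x within {a..b} = at x within {a..t k}"
      using assms(3)[of k] by (intro at_within_nhd[of x "{..<t k}"]) auto
    moreover have "continuous (at x within {a..t k}) F"
      using cont[of k] \<open>x < t k\<close> x by (simp add: continuous_on_eq_continuous_within)
    ultimately show ?thesis by simp
  next
    case False
    with x have "x = b" by simp
    with lim \<open>a < b\<close> show ?thesis
      by (simp add: continuous_within at_within_Icc_at_left)
  qed
qed

lemma denjoy_primitive_from_initial_segments:
  assumes "a < b" and t: "\<And>k. t k \<in> {a..<b}" "filterlim t (at_left b) sequentially"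
    and prim: "\<And>k. denjoy_primitive F h a (t k)" and lim: "(F \<longlongrightarrow> F b) (at_left b)"
  shows "denjoy_primitive F h a b"
proof -
  have exceeds: "\<exists>k. x < t k" if "x < b" for x
  proof -
    have "t \<longlonglongrightarrow> b" using t(2) by (simp add: filterlim_at)
    from order_tendstoD(1)[OF this that] show ?thesis
      by (auto simp: eventually_sequentially)
  qed
  obtain E :: "nat \<Rightarrow> nat \<Rightarrow> real set" where
    cont: "\<And>k. continuous_on {a..t k} F" and
    E: "\<And>k. (\<Union>n. E k n) = {a..t k}" "\<And>k n. AC_on_set F (E k n)" and
    deriv: "\<And>k. AE x in lebesgue. x \<in> {a..t k} \<longrightarrow> approx_deriv F a (t k) x (h x)"
    using prim unfolding denjoy_primitive_def ACG_on_def by metis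
  have "continuous_on {a..b} F"
  proof (rule continuous_on_from_initial_segments[OF \<open>a < b\<close> exceeds _ cont lim])
    show "t k \<le> b" for k using t(1)[of k] by simp
  qed
  moreover have "ACG_on F a b"
  proof (rule ACG_on_countable_cover)
    let ?\<E> = "insert {b} (range (case_prod E))"
    have E_sub: "E k n \<subseteq> {a..b}" for k n
    proof -
      have "E k n \<subseteq> (\<Union>n. E k n)" by blast
      also have "\<dots> \<subseteq> {a..b}" unfolding E(1) using t(1)[of k] by auto
      finally show ?thesis .
    qed
    show "\<Union>?\<E> = {a..b}"
    proof
      show "\<Union>?\<E> \<subseteq> {a..b}"
        using E_sub \<open>a < b\<close> by auto
      show "{a..b} \<subseteq> \<Union>?\<E>"
      proof
        fix x assume x: "x \<in> {a..b}"
        show "x \<in> \<Union>?\<E>"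
        proof (cases "x < b")
          case True
          then obtain k where "x < t k" using exceeds by blast
          with x have "x \<in> (\<Union>n. E k n)" unfolding E(1) by simp
          then show ?thesis by blast
        qed (use x in simp)
      qed
    qed
    show "countable ?\<E>" by simp
    show "AC_on_set F S" if "S \<in> ?\<E>" for S
      using that E(2) AC_on_set_singleton by auto
  qed (use \<open>a < b\<close> \<open>continuous_on {a..b} F\<close> in simp_all)
  moreover have "AE x in lebesgue. x \<in> {a..b} \<longrightarrow> approx_deriv F a b x (h x)"
  proof -
    have "AE x in lebesgue. x \<notin> {b}"
      by (rule AE_not_in) (simp add: negligible_iff_null_sets[symmetric])
    moreover have "AE x in lebesgue. \<forall>k. x \<in> {a..t k} \<longrightarrow> approx_deriv F a (t k) x (h x)"
      using deriv by (simp add: AE_all_countable)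
    ultimately show ?thesis
    proof eventually_elim
      case (elim x)
      show ?case
      proof
        assume "x \<in> {a..b}"
        with elim(1) have "x < b" by simp
        then obtain k where "x < t k" using exceeds by blast
        with elim(2) \<open>x \<in> {a..b}\<close> have "approx_deriv F a (t k) x (h x)" by simp
        then show "approx_deriv F a b x (h x)"
          by (rule approx_deriv_superinterval) (use \<open>x < t k\<close> t(1)[of k] in simp_all)
      qed
    qed
  qed
  ultimately show ?thesis unfolding denjoy_primitive_def by blast
qed

lemma denjoy_integral_left_limit:
  assumes "a < b" and int: "\<And>t. t \<in> {a..<b} \<Longrightarrow> denjoy_integrable h a t"
    and lim: "((\<lambda>t. denjoy_integral h a t) \<longlongrightarrow> L) (at_left b)"
  shows "denjoy_integrable h a b" "denjoy_integral h a b = L"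
proof -
  define F where "F t = (if t < b then denjoy_integral h a t else L)" for t
  obtain t where t: "\<And>k. t k \<in> {a..<b}" "filterlim t (at_left b) sequentially"
    using at_left_approach_sequence[OF \<open>a < b\<close>] by blast
  have "denjoy_primitive F h a (t k)" for k
  proof -
    obtain P where P: "denjoy_primitive P h a (t k)"
      using int[OF t(1)] unfolding denjoy_integrable_def by blast
    have "F s = P s + - P a" if "s \<in> {a..t k}" for s
    proof -
      have "denjoy_integral h a s = P s - P a"
        using that by (intro denjoy_integral_eq_primitive denjoy_primitive_subinterval[OF P]) auto
      moreover have "s < b" using that t(1)[of k] by auto
      ultimately show ?thesis by (simp add: F_def)
    qed
    with P show ?thesis by (rule denjoy_primitive_cong_add_const)
  qed
  moreover have "(F \<longlongrightarrow> F b) (at_left b)"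
  proof -
    have "\<forall>\<^sub>F s in at_left b. denjoy_integral h a s = F s"
      using eventually_at_left_real[OF \<open>a < b\<close>] by eventually_elim (simp add: F_def)
    with lim have "(F \<longlongrightarrow> L) (at_left b)" by (rule Lim_transform_eventually)
    then show ?thesis by (simp add: F_def)
  qed
  ultimately have prim: "denjoy_primitive F h a b"
    using \<open>a < b\<close> t by (blast intro: denjoy_primitive_from_initial_segments)
  then show "denjoy_integrable h a b" unfolding denjoy_integrable_def by blast
  have "denjoy_integral h a a = F a - F a"
    using \<open>a < b\<close> by (intro denjoy_integral_eq_primitive denjoy_primitive_subinterval[OF prim]) auto
  moreover have "denjoy_integral h a b = F b - F a"
    using \<open>a < b\<close> prim by (intro denjoy_integral_eq_primitive) auto
  ultimately show "denjoy_integral h a b = L"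
    using \<open>a < b\<close> by (simp add: F_def)
qed

section \<open>Functionals in the dual of a Banach space\<close>

text \<open>The uniform boundedness principle, from the Baire category theorem: some closed set
  \<open>{y. \<forall>n. \<bar>T n y\<bar> \<le> m}\<close> contains a ball.\<close>
lemma blinfun_uniformly_bounded_if_pointwise_bounded:
  fixes T :: "nat \<Rightarrow> ('a::banach \<Rightarrow>\<^sub>L real)"
  assumes "\<And>y. \<exists>B. \<forall>n. \<bar>T n y\<bar> \<le> B"
  shows "\<exists>M. \<forall>n. norm (T n) \<le> M"
proof -
  define C where "C m = {y. \<forall>n. \<bar>T n y\<bar> \<le> real m}" for m :: nat
  have "continuous_on UNIV (\<lambda>y. \<bar>T n y\<bar>)" for n
    by (intro continuous_intros linear_continuous_on blinfun.bounded_linear_right)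
  then have "closed {y. \<bar>T n y\<bar> \<le> real m}" for n m
    by (rule closed_Collect_le[OF _ continuous_on_const])
  moreover have "C m = (\<Inter>n. {y. \<bar>T n y\<bar> \<le> real m})" for m unfolding C_def by blast
  ultimately have closed_C: "closed (C m)" for m by (simp add: closed_INT)
  have "y \<in> (\<Union>m. C m)" for y
  proof -
    obtain B where B: "\<forall>n. \<bar>T n y\<bar> \<le> B" using assms by blast
    have "B \<le> real (nat \<lceil>B\<rceil>)" by linarith
    with B have "y \<in> C (nat \<lceil>B\<rceil>)" unfolding C_def using order_trans by blast
    then show ?thesis by blast
  qed
  then have cover: "(\<Union>m. C m) = UNIV" by blast
  have "\<exists>m. interior (C m) \<noteq> {}"
  proof (rule ccontr)
    assume "\<not> (\<exists>m. interior (C m) \<noteq> {})"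
    then have empty: "\<And>m. interior (C m) = {}" by blast
    have "euclidean interior_of \<Union>(range C) = {}"
    proof (rule Baire_category_alt)
      show "completely_metrizable_space (euclidean :: 'a topology) \<or>
          locally_compact_space (euclidean :: 'a topology) \<and> regular_space euclidean"
        using completely_metrizable_space_euclidean by blast
      show "countable (range C)" by simp
      fix S assume "S \<in> range C"
      then obtain m where "S = C m" by blast
      then show "closedin euclidean S \<and> euclidean interior_of S = {}"
        using closed_C empty by (simp add: closed_closedin[symmetric])
    qed
    then show False using cover by simp
  qed
  then obtain m y0 where "y0 \<in> interior (C m)" by blast
  then obtain r where "r > 0" "ball y0 r \<subseteq> C m"
    using open_contains_ball[of "interior (C m)"] interior_subset[of "C m"] by blast
  have ball: "\<bar>T n (y0 + z)\<bar> \<le> m" if "norm z < r" for n z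
  proof -
    have "y0 + z \<in> ball y0 r" using that by (simp add: dist_norm)
    with \<open>ball y0 r \<subseteq> C m\<close> show ?thesis unfolding C_def by blast
  qed
  have small: "\<bar>T n z\<bar> \<le> 2 * real m" if "norm z < r" for n z
  proof -
    have "T n z = T n (y0 + z) - T n y0" by (simp add: blinfun.add_right)
    with ball[OF that, of n] ball[of 0 n] \<open>r > 0\<close> show ?thesis by simp
  qed
  have "norm (T n) \<le> 4 * real m / r" for n
  proof (rule norm_blinfun_bound)
    show "0 \<le> 4 * real m / r" using \<open>r > 0\<close> by simp
    show "norm (T n y) \<le> 4 * real m / r * norm y" for y
    proof (cases "y = 0")
      case False
      define z where "z = (r / (2 * norm y)) *\<^sub>R y"
      have "norm z < r" unfolding z_def using False \<open>r > 0\<close> by simp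
      have Tz: "T n z = (r / (2 * norm y)) * T n y" unfolding z_def by (simp add: blinfun.scaleR_right)
      have "\<bar>T n y\<bar> = (2 * norm y / r) * \<bar>T n z\<bar>"
        unfolding Tz using False \<open>r > 0\<close> by (simp add: abs_mult field_simps)
      also have "\<dots> \<le> (2 * norm y / r) * (2 * real m)"
        using small[OF \<open>norm z < r\<close>] \<open>r > 0\<close> by (intro mult_left_mono) simp_all
      finally show ?thesis by (simp add: field_simps)
    qed simp
  qed
  then show ?thesis by blast
qed

lemma bounded_linear_pointwise_limit_blinfun:
  fixes T :: "nat \<Rightarrow> ('a::banach \<Rightarrow>\<^sub>L real)"
  assumes lim: "\<And>y. (\<lambda>n. T n y) \<longlonglongrightarrow> L y"
  shows "bounded_linear L"
proof -
  have "\<exists>B. \<forall>n. \<bar>T n y\<bar> \<le> B" for y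
    using convergent_imp_Bseq[OF convergentI[OF lim]] by (auto simp: Bseq_def)
  then obtain M where M: "\<And>n. norm (T n) \<le> M"
    using blinfun_uniformly_bounded_if_pointwise_bounded by blast
  show ?thesis
  proof (rule bounded_linear_intro)
    show "L (y + z) = L y + L z" for y z
      using lim[of "y + z"] tendsto_add[OF lim[of y] lim[of z]]
      unfolding blinfun.add_right by (rule LIMSEQ_unique)
    show "L (r *\<^sub>R y) = r *\<^sub>R L y" for r y
      using lim[of "r *\<^sub>R y"] tendsto_scaleR[OF tendsto_const lim[of y]]
      unfolding blinfun.scaleR_right by (rule LIMSEQ_unique)
    show "norm (L y) \<le> norm y * M" for y
    proof (rule LIMSEQ_le_const2[OF tendsto_norm[OF lim]])
      have "norm (T n y) \<le> norm y * M" for n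
        using norm_blinfun[of "T n" y] mult_left_mono[OF M[of n], of "norm y"]
        by (simp add: mult.commute)
      then show "\<exists>N. \<forall>n\<ge>N. norm (T n y) \<le> norm y * M" by blast
    qed
  qed
qed

lemma DG_integral_apply:
  fixes g :: "real \<Rightarrow> ('a::banach \<Rightarrow>\<^sub>L real)"
  assumes "\<exists>\<phi> :: 'a \<Rightarrow>\<^sub>L real. \<forall>y. \<phi> y = denjoy_integral (\<lambda>t. g t y) c d"
  shows "DG_integral g c d y = denjoy_integral (\<lambda>t. g t y) c d"
proof -
  have "\<exists>!\<phi> :: 'a \<Rightarrow>\<^sub>L real. \<forall>y. \<phi> y = denjoy_integral (\<lambda>t. g t y) c d"
    using assms by (auto intro: blinfun_eqI)
  from theI'[OF this] show ?thesis unfolding DG_integral_def by blast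
qed

text \<open>The functionals \<open>I_c^d\<close> are differences \<open>\<Phi>_d - \<Phi>_c\<close> of the functionals
  \<open>\<Phi>_c = I_a^c\<close>.\<close>
lemma DG_integrable_if_initial_functionals:
  fixes g :: "real \<Rightarrow> ('a::banach \<Rightarrow>\<^sub>L real)"
  assumes int: "\<And>y. denjoy_integrable (\<lambda>t. g t y) a b"
    and \<Phi>: "\<And>c. c \<in> {a..b} \<Longrightarrow> \<exists>\<phi> :: 'a \<Rightarrow>\<^sub>L real. \<forall>y. \<phi> y = denjoy_integral (\<lambda>t. g t y) a c"
  shows "DG_integrable g a b"
  unfolding DG_integrable_def
proof (intro conjI allI impI int)
  fix c d assume cd: "a \<le> c \<and> c \<le> d \<and> d \<le> b"
  obtain \<phi> \<psi> :: "'a \<Rightarrow>\<^sub>L real" where "\<And>y. \<phi> y = denjoy_integral (\<lambda>t. g t y) a c"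
    and "\<And>y. \<psi> y = denjoy_integral (\<lambda>t. g t y) a d"
    using \<Phi>[of c] \<Phi>[of d] cd by auto
  moreover have "denjoy_integrable (\<lambda>t. g t y) a d" for y
    using int[of y] cd denjoy_primitive_subinterval[of _ _ a b a d]
    unfolding denjoy_integrable_def by blast
  ultimately have "(\<psi> - \<phi>) y = denjoy_integral (\<lambda>t. g t y) c d" for y
    using denjoy_integral_add[of "\<lambda>t. g t y" a d c] cd by (simp add: blinfun.diff_left)
  then show "\<exists>\<phi> :: 'a \<Rightarrow>\<^sub>L real. \<forall>y. \<phi> y = denjoy_integral (\<lambda>t. g t y) c d" by blast
qed

theorem proposition2p1:
  fixes g :: "real \<Rightarrow> ('a::banach \<Rightarrow>\<^sub>L real)" and a b :: real
  assumes "a < b"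
    and "\<forall>t \<in> {a..<b}. DG_integrable g a t"
    and "\<forall>y. \<exists>L. ((\<lambda>t. denjoy_integral (\<lambda>s. g s y) a t) \<longlongrightarrow> L) (at_left b)"
  shows "DG_integrable g a b \<and>
         (\<forall>y. ((\<lambda>t. DG_integral g a t y) \<longlongrightarrow> DG_integral g a b y) (at_left b))"
proof -
  obtain L where L: "\<And>y. ((\<lambda>t. denjoy_integral (\<lambda>s. g s y) a t) \<longlongrightarrow> L y) (at_left b)"
    using assms(3) by metis
  have initial: "\<exists>\<phi> :: 'a \<Rightarrow>\<^sub>L real. \<forall>y. \<phi> y = denjoy_integral (\<lambda>s. g s y) a t"
    and "denjoy_integrable (\<lambda>s. g s y) a t" if "t \<in> {a..<b}" for t y
    using assms(2) that unfolding DG_integrable_def by auto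
  then have int: "denjoy_integrable (\<lambda>s. g s y) a b"
    and integral: "denjoy_integral (\<lambda>s. g s y) a b = L y" for y
    using denjoy_integral_left_limit[OF \<open>a < b\<close> _ L] by blast+
  have DG_initial: "DG_integral g a t y = denjoy_integral (\<lambda>s. g s y) a t" if "t \<in> {a..<b}" for t y
    using initial[OF that] by (rule DG_integral_apply)
  obtain t where t: "\<And>k. t k \<in> {a..<b}" "filterlim t (at_left b) sequentially"
    using at_left_approach_sequence[OF \<open>a < b\<close>] by blast
  have "(\<lambda>k. DG_integral g a (t k) y) \<longlonglongrightarrow> L y" for y
    using filterlim_compose[OF L t(2)] by (simp add: DG_initial[OF t(1)])
  then have "bounded_linear L" by (rule bounded_linear_pointwise_limit_blinfun)
  then have final: "\<forall>y. Blinfun L y = denjoy_integral (\<lambda>s. g s y) a b"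
    by (simp add: bounded_linear_Blinfun_apply integral)
  have "DG_integrable g a b"
  proof (rule DG_integrable_if_initial_functionals[OF int])
    show "\<exists>\<phi> :: 'a \<Rightarrow>\<^sub>L real. \<forall>y. \<phi> y = denjoy_integral (\<lambda>s. g s y) a c" if "c \<in> {a..b}" for c
      using initial[of c] final that by (cases "c < b") auto
  qed
  moreover have "((\<lambda>t. DG_integral g a t y) \<longlongrightarrow> DG_integral g a b y) (at_left b)" for y
  proof -
    have "\<forall>\<^sub>F s in at_left b. denjoy_integral (\<lambda>s. g s y) a s = DG_integral g a s y"
      using eventually_at_left_real[OF \<open>a < b\<close>] by eventually_elim (simp add: DG_initial)
    with L have "((\<lambda>t. DG_integral g a t y) \<longlongrightarrow> L y) (at_left b)"
      by (rule Lim_transform_eventually)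
    moreover have "DG_integral g a b y = L y"
      using DG_integral_apply[of g a b y] final integral by metis
    ultimately show ?thesis by simp
  qed
  ultimately show ?thesis by blast
qed
end
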